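(* Let $\varphi=\sum_{n=-\infty}^\infty\varphi_nz^n\in L^\infty(\mathbb{T})$ and let $C$ be a conjugation on $H^2(\mathbb{D})$ with canonical factorization $C=UJ_{H^2(\mathbb{D})}$ ($U$ unitary). Put $u_{i,j}:=\langle Uz^i,z^j\rangle=\langle Cz^i,z^j\rangle$ for $i,j\in\mathbb{Z}_+$. The following are equivalent: (1) $T_\varphi$ is $C$-symmetric; (2) $\varphi_{m-n}=\langle U^*T_\varphi Uz^m,z^n\rangle$ for all $m,n\in\mathbb{Z}_+$; (3) $\varphi_{m-n}=\sum_{i,j=0}^\infty u_{m,j}\,\varphi_{i-j}\,\overline{u_{i,n}}$ for all $m,n\in\mathbb{Z}_+$.
   Context: A conjugation is an anti-linear, involutive, isometric map; $T$ is $C$-symmetric if $CT^*C=T$. $H^2(\mathbb{D})$ is the Hardy space of the disc with orthonormal basis $\{z^n\}_{n\in\mathbb{Z}_+}$, inner product linear in the first entry; $T_\varphi f=P_{H^2(\mathbb{D})}(\varphi f)$; $J_{H^2(\mathbb{D})}(\sum a_nz^n)=\sum\bar a_nz^n$; the canonical factorization of $C$ is the unique factorization $C=UJ_{H^2(\mathbb{D})}$ with $U$ unitary. *)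

theory Defs
  imports "HOL-Analysis.Analysis"
begin

text \<open>The Hardy space H^2(D) is represented by its Taylor coefficient sequences:
  f = sum a_n z^n is identified with a :: nat => complex, square summable.\<close>

definition H2 :: "(nat \<Rightarrow> complex) set" where
  "H2 = {a. summable (\<lambda>n. (cmod (a n))\<^sup>2)}"

definition h2_inner :: "(nat \<Rightarrow> complex) \<Rightarrow> (nat \<Rightarrow> complex) \<Rightarrow> complex" where
  "h2_inner f g = (\<Sum>n. f n * cnj (g n))"

definition h2_norm :: "(nat \<Rightarrow> complex) \<Rightarrow> real" where
  "h2_norm f = sqrt (\<Sum>n. (cmod (f n))\<^sup>2)"

definition zmono :: "nat \<Rightarrow> nat \<Rightarrow> complex" where
  "zmono k = (\<lambda>n. if n = k then 1 else 0)"

definition J_H2 :: "(nat \<Rightarrow> complex) \<Rightarrow> nat \<Rightarrow> complex" where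
  "J_H2 f = (\<lambda>n. cnj (f n))"

definition conjugation :: "((nat \<Rightarrow> complex) \<Rightarrow> nat \<Rightarrow> complex) \<Rightarrow> bool" where
  "conjugation C \<longleftrightarrow>
     (\<forall>f\<in>H2. C f \<in> H2) \<and>
     (\<forall>f\<in>H2. \<forall>g\<in>H2. \<forall>a b. C (\<lambda>n. a * f n + b * g n) = (\<lambda>n. cnj a * C f n + cnj b * C g n)) \<and>
     (\<forall>f\<in>H2. C (C f) = f) \<and>
     (\<forall>f\<in>H2. h2_norm (C f) = h2_norm f)"

definition unitary_H2 :: "((nat \<Rightarrow> complex) \<Rightarrow> nat \<Rightarrow> complex) \<Rightarrow> bool" where
  "unitary_H2 U \<longleftrightarrow>
     (\<forall>f\<in>H2. U f \<in> H2) \<and>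
     (\<forall>f\<in>H2. \<forall>g\<in>H2. \<forall>a b. U (\<lambda>n. a * f n + b * g n) = (\<lambda>n. a * U f n + b * U g n)) \<and>
     (\<forall>f\<in>H2. h2_norm (U f) = h2_norm f) \<and>
     (\<forall>g\<in>H2. \<exists>f\<in>H2. U f = g)"

text \<open>Hilbert space adjoint on H^2 (defined pointwise on H^2 via the Riesz
  representative; values outside H^2 are irrelevant and set to 0).\<close>
definition adj_H2 :: "((nat \<Rightarrow> complex) \<Rightarrow> nat \<Rightarrow> complex) \<Rightarrow> (nat \<Rightarrow> complex) \<Rightarrow> nat \<Rightarrow> complex" where
  "adj_H2 T g = (if g \<in> H2 then (THE h. h \<in> H2 \<and> (\<forall>f\<in>H2. h2_inner (T f) g = h2_inner f h))
                 else (\<lambda>_. 0))"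

definition C_symmetric :: "((nat \<Rightarrow> complex) \<Rightarrow> nat \<Rightarrow> complex) \<Rightarrow> ((nat \<Rightarrow> complex) \<Rightarrow> nat \<Rightarrow> complex) \<Rightarrow> bool" where
  "C_symmetric C T \<longleftrightarrow> (\<forall>f\<in>H2. C (adj_H2 T (C f)) = T f)"

definition Linfty_T :: "(complex \<Rightarrow> complex) \<Rightarrow> bool" where
  "Linfty_T \<phi> \<longleftrightarrow>
     (\<lambda>t. \<phi> (cis t)) \<in> borel_measurable (lebesgue_on {0..2*pi}) \<and>
     (\<exists>B. AE t in lebesgue_on {0..2*pi}. cmod (\<phi> (cis t)) \<le> B)"

definition fourier_coeff :: "(complex \<Rightarrow> complex) \<Rightarrow> int \<Rightarrow> complex" where
  "fourier_coeff \<phi> n =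
     complex_of_real (1 / (2*pi)) *
       integral\<^sup>L (lebesgue_on {0..2*pi}) (\<lambda>t. \<phi> (cis t) * cis (- (of_int n * t)))"

text \<open>Toeplitz operator T_phi f = P_{H^2}(phi f): the n-th Taylor coefficient of
  P(phi f) is the n-th Fourier coefficient of phi f, i.e. sum_m phi_{n-m} f_m.\<close>
definition toeplitz :: "(complex \<Rightarrow> complex) \<Rightarrow> (nat \<Rightarrow> complex) \<Rightarrow> nat \<Rightarrow> complex" where
  "toeplitz \<phi> f = (\<lambda>n. \<Sum>m. fourier_coeff \<phi> (int n - int m) * f m)"

end

theory Submission
  imports Defs
begin

text \<open>
  T_phi is bounded on H2: applying a finite section of its matrix to coefficients c_m produces
  Fourier coefficients of phi p, where p = sum c_m z^m, so Bessel's inequality for phi p and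
  Parseval's identity for p bound it by the essential supremum of phi times the norm of c.
  Hence the adjoint of T_phi exists and equals T_(conj phi).
  For a conjugation C the coordinates (C z^i)_j are symmetric in i and j, and
  <C T^* C z^n, z^m> = <T C z^m, C z^n>. So T is C-symmetric iff these numbers are the matrix
  entries phi_(m-n) of T; this is (1) iff (2) because C z^m = U z^m and <U^* y, x> = <y, U x>,
  and expanding <T U z^m, U z^n> in the basis z^k gives (3).
\<close>

section \<open>The sequence space H2\<close>

lemma suminf_cnj: "summable f \<Longrightarrow> (\<Sum>n. cnj (f n)) = cnj (suminf f)"
  by (rule sums_unique[symmetric]) (simp add: sums_cnj summable_sums)

lemma square_summable_norm_mult:
  fixes x y :: "nat \<Rightarrow> complex"
  assumes "summable (\<lambda>n. (cmod (x n))\<^sup>2)" and "summable (\<lambda>n. (cmod (y n))\<^sup>2)"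
  shows "summable (\<lambda>n. cmod (x n * y n))"
proof (rule summable_comparison_test'[where N = 0])
  show "summable (\<lambda>n. ((cmod (x n))\<^sup>2 + (cmod (y n))\<^sup>2) / 2)"
    using assms by (intro summable_divide summable_add)
  show "norm (cmod (x n * y n)) \<le> ((cmod (x n))\<^sup>2 + (cmod (y n))\<^sup>2) / 2" for n
    using sum_squares_bound[of "cmod (x n)" "cmod (y n)"] by (simp add: norm_mult)
qed

lemma square_summable_mult:
  fixes x y :: "nat \<Rightarrow> complex"
  assumes "summable (\<lambda>n. (cmod (x n))\<^sup>2)" and "summable (\<lambda>n. (cmod (y n))\<^sup>2)"
  shows "summable (\<lambda>n. x n * y n)"
  using square_summable_norm_mult[OF assms] by (rule summable_norm_cancel)

lemma H2_lincomb:
  assumes "f \<in> H2" and "g \<in> H2"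
  shows "(\<lambda>n. a * f n + b * g n) \<in> H2"
  unfolding H2_def mem_Collect_eq
proof (rule summable_comparison_test'[where N = 0])
  show "summable (\<lambda>n. 2 * (cmod a)\<^sup>2 * (cmod (f n))\<^sup>2 + 2 * (cmod b)\<^sup>2 * (cmod (g n))\<^sup>2)"
    using assms by (intro summable_add summable_mult) (auto simp: H2_def)
  have sum_sq_le: "(cmod (x + y))\<^sup>2 \<le> 2 * (cmod x)\<^sup>2 + 2 * (cmod y)\<^sup>2" for x y :: complex
    using power_mono[OF norm_triangle_ineq[of x y], of 2] sum_squares_bound[of "cmod x" "cmod y"]
    by (simp add: power2_sum)
  show "norm ((cmod (a * f n + b * g n))\<^sup>2)
      \<le> 2 * (cmod a)\<^sup>2 * (cmod (f n))\<^sup>2 + 2 * (cmod b)\<^sup>2 * (cmod (g n))\<^sup>2" for n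
    using sum_sq_le[of "a * f n" "b * g n"] by (simp add: norm_mult power_mult_distrib mult.assoc)
qed

lemma H2_dominated: "f \<in> H2 \<Longrightarrow> (\<And>n. cmod (g n) \<le> cmod (f n)) \<Longrightarrow> g \<in> H2"
  unfolding H2_def mem_Collect_eq
  by (rule summable_comparison_test'[where N = 0]) (auto intro: power_mono)

lemma zmono_in_H2: "zmono k \<in> H2"
  unfolding H2_def by (rule CollectI, rule summable_finite[of "{k}"]) (auto simp: zmono_def)

lemma summable_h2_inner: "f \<in> H2 \<Longrightarrow> g \<in> H2 \<Longrightarrow> summable (\<lambda>n. f n * cnj (g n))"
  by (rule square_summable_mult) (auto simp: H2_def)

lemma h2_inner_zmono_right [simp]: "h2_inner f (zmono k) = f k"
proof -
  have "(\<Sum>n. f n * cnj (zmono k n)) = (\<Sum>n\<in>{k}. f n * cnj (zmono k n))"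
    by (rule suminf_finite) (auto simp: zmono_def)
  then show ?thesis by (simp add: h2_inner_def zmono_def)
qed

lemma h2_inner_zmono_left [simp]: "h2_inner (zmono k) g = cnj (g k)"
proof -
  have "(\<Sum>n. zmono k n * cnj (g n)) = (\<Sum>n\<in>{k}. zmono k n * cnj (g n))"
    by (rule suminf_finite) (auto simp: zmono_def)
  then show ?thesis by (simp add: h2_inner_def zmono_def)
qed

lemma h2_inner_commute: "f \<in> H2 \<Longrightarrow> g \<in> H2 \<Longrightarrow> h2_inner g f = cnj (h2_inner f g)"
  unfolding h2_inner_def by (simp add: suminf_cnj[symmetric] summable_h2_inner mult.commute)

lemma h2_inner_add_left:
  assumes "f \<in> H2" and "f' \<in> H2" and "g \<in> H2"
  shows "h2_inner (\<lambda>n. f n + f' n) g = h2_inner f g + h2_inner f' g"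
  unfolding h2_inner_def
  using suminf_add[OF summable_h2_inner[OF assms(1,3)] summable_h2_inner[OF assms(2,3)]]
  by (simp add: distrib_right)

lemma h2_norm_square: "f \<in> H2 \<Longrightarrow> (h2_norm f)\<^sup>2 = (\<Sum>n. (cmod (f n))\<^sup>2)"
  by (simp add: h2_norm_def H2_def suminf_nonneg)

text \<open>All four terms have the shape f + b g, so that two maps preserving the norms of such
  combinations can be compared term by term.\<close>

lemma h2_polarization:
  assumes f: "f \<in> H2" and g: "g \<in> H2"
  shows "4 * h2_inner f g
    = of_real ((h2_norm (\<lambda>n. f n + 1 * g n))\<^sup>2)
      - of_real ((h2_norm (\<lambda>n. f n + (-1) * g n))\<^sup>2)
      + \<i> * of_real ((h2_norm (\<lambda>n. f n + \<i> * g n))\<^sup>2)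
      - \<i> * of_real ((h2_norm (\<lambda>n. f n + (-\<i>) * g n))\<^sup>2)"
    (is "_ = ?N 1 - ?N (-1) + \<i> * ?N \<i> - \<i> * ?N (-\<i>)")
proof -
  define sq where "sq b n = complex_of_real ((cmod (f n + b * g n))\<^sup>2)" for b n
  have sums_sq: "sq b sums ?N b" for b
  proof -
    have fbg: "(\<lambda>n. f n + b * g n) \<in> H2" using H2_lincomb[OF f g, of 1 b] by simp
    then show ?thesis
      unfolding sq_def h2_norm_square[OF fbg]
      by (intro sums_of_real summable_sums) (use fbg in \<open>simp add: H2_def\<close>)
  qed
  have pointwise: "4 * (f n * cnj (g n)) = sq 1 n - sq (-1) n + \<i> * sq \<i> n - \<i> * sq (-\<i>) n" for n
    unfolding sq_def cmod_power2 by (simp add: complex_eq_iff algebra_simps power2_eq_square)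
  have "(\<lambda>n. 4 * (f n * cnj (g n))) sums (4 * h2_inner f g)"
    unfolding h2_inner_def by (intro sums_mult summable_sums summable_h2_inner f g)
  moreover have "(\<lambda>n. 4 * (f n * cnj (g n))) sums (?N 1 - ?N (-1) + \<i> * ?N \<i> - \<i> * ?N (-\<i>))"
    unfolding pointwise by (intro sums_diff sums_add sums_mult sums_sq)
  ultimately show ?thesis by (rule sums_unique2)
qed

lemma h2_inner_norm_le:
  assumes "x \<in> H2" and "y \<in> H2"
  shows "cmod (h2_inner x y) \<le> h2_norm x * h2_norm y"
proof -
  have xs: "summable (\<lambda>n. (cmod (x n))\<^sup>2)" and ys: "summable (\<lambda>n. (cmod (y n))\<^sup>2)"
    using assms by (auto simp: H2_def)
  have sn: "summable (\<lambda>n. cmod (x n * cnj (y n)))"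
    using square_summable_norm_mult[OF xs, of "\<lambda>n. cnj (y n)"] ys by simp
  have "cmod (h2_inner x y) \<le> (\<Sum>n. cmod (x n * cnj (y n)))"
    unfolding h2_inner_def by (rule summable_norm[OF sn])
  also have "\<dots> \<le> h2_norm x * h2_norm y"
  proof (rule suminf_le_const[OF sn])
    fix L
    have "(\<Sum>n<L. cmod (x n * cnj (y n))) = (\<Sum>n<L. \<bar>cmod (x n)\<bar> * \<bar>cmod (y n)\<bar>)"
      by (simp add: norm_mult)
    also have "\<dots> \<le> L2_set (\<lambda>n. cmod (x n)) {..<L} * L2_set (\<lambda>n. cmod (y n)) {..<L}"
      by (rule L2_set_mult_ineq)
    also have "\<dots> \<le> h2_norm x * h2_norm y"
      unfolding L2_set_def h2_norm_def
      by (intro mult_mono real_sqrt_le_mono sum_le_suminf xs ys)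
         (auto intro: suminf_nonneg sum_nonneg xs)
    finally show "(\<Sum>n<L. cmod (x n * cnj (y n))) \<le> h2_norm x * h2_norm y" .
  qed
  finally show ?thesis .
qed

lemma h2_norm_tail_tendsto_0:
  assumes "f \<in> H2"
  shows "(\<lambda>N. h2_norm (\<lambda>m. if m < N then 0 else f m)) \<longlonglongrightarrow> 0"
proof -
  have fs: "summable (\<lambda>m. (cmod (f m))\<^sup>2)" using assms by (simp add: H2_def)
  have "(\<Sum>m. (cmod (if m < N then 0 else f m))\<^sup>2) = (\<Sum>k. (cmod (f (k + N)))\<^sup>2)" for N
  proof -
    have "(\<lambda>m. if m < N then 0 else f m) \<in> H2"
      by (rule H2_dominated[OF assms]) simp
    then have "summable (\<lambda>m. (cmod (if m < N then 0 else f m))\<^sup>2)"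
      by (simp add: H2_def)
    from suminf_split_initial_segment[OF this, of N] show ?thesis by simp
  qed
  moreover have "(\<lambda>N. sqrt (\<Sum>k. (cmod (f (k + N)))\<^sup>2)) \<longlonglongrightarrow> sqrt 0"
    by (intro tendsto_real_sqrt suminf_exist_split2 fs)
  ultimately show ?thesis by (simp add: h2_norm_def)
qed

section \<open>Unitary operators, adjoints and conjugations\<close>

lemma unitary_H2_in_H2: "unitary_H2 U \<Longrightarrow> f \<in> H2 \<Longrightarrow> U f \<in> H2"
  unfolding unitary_H2_def by blast

lemma unitary_H2_norm: "unitary_H2 U \<Longrightarrow> f \<in> H2 \<Longrightarrow> h2_norm (U f) = h2_norm f"
  unfolding unitary_H2_def by blast

lemma unitary_H2_add_scaled:
  assumes "unitary_H2 U" and "f \<in> H2" and "g \<in> H2"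
  shows "U (\<lambda>n. f n + b * g n) = (\<lambda>n. U f n + b * U g n)"
proof -
  have "U (\<lambda>n. 1 * f n + b * g n) = (\<lambda>n. 1 * U f n + b * U g n)"
    using assms unfolding unitary_H2_def by blast
  then show ?thesis by simp
qed

lemma h2_inner_unitary_H2:
  assumes U: "unitary_H2 U" and f: "f \<in> H2" and g: "g \<in> H2"
  shows "h2_inner (U f) (U g) = h2_inner f g"
proof -
  have norm_U: "h2_norm (\<lambda>n. U f n + b * U g n) = h2_norm (\<lambda>n. f n + b * g n)" for b
    using unitary_H2_norm[OF U H2_lincomb[OF f g, of 1 b]] unitary_H2_add_scaled[OF U f g, of b]
    by simp
  have "4 * h2_inner (U f) (U g) = 4 * h2_inner f g"
    unfolding h2_polarization[OF unitary_H2_in_H2[OF U f] unitary_H2_in_H2[OF U g]]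
      h2_polarization[OF f g] norm_U ..
  then show ?thesis by simp
qed

lemma adj_H2_eqI:
  assumes "g \<in> H2" and "h \<in> H2" and "\<forall>f\<in>H2. h2_inner (T f) g = h2_inner f h"
  shows "adj_H2 T g = h"
proof -
  have "h' = h" if "\<forall>f\<in>H2. h2_inner (T f) g = h2_inner f h'" for h'
  proof
    fix n
    show "h' n = h n"
      using that[rule_format, OF zmono_in_H2[of n]] assms(3)[rule_format, OF zmono_in_H2[of n]]
      by simp
  qed
  then have "(THE h. h \<in> H2 \<and> (\<forall>f\<in>H2. h2_inner (T f) g = h2_inner f h)) = h"
    using assms by (intro the_equality) auto
  then show ?thesis using assms(1) by (simp add: adj_H2_def)
qed

lemma h2_inner_adj_H2_unitary:
  assumes U: "unitary_H2 U" and y: "y \<in> H2" and x: "x \<in> H2"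
  shows "h2_inner (adj_H2 U y) x = h2_inner y (U x)"
proof -
  obtain f where f: "f \<in> H2" "U f = y" using U y unfolding unitary_H2_def by blast
  have "adj_H2 U y = f"
    using f by (intro adj_H2_eqI y) (auto simp: h2_inner_unitary_H2[OF U])
  then show ?thesis using h2_inner_unitary_H2[OF U f(1) x] f(2) by simp
qed

lemma conjugation_in_H2: "conjugation C \<Longrightarrow> f \<in> H2 \<Longrightarrow> C f \<in> H2"
  unfolding conjugation_def by blast

lemma conjugation_involutive: "conjugation C \<Longrightarrow> f \<in> H2 \<Longrightarrow> C (C f) = f"
  unfolding conjugation_def by blast

lemma h2_inner_conjugation:
  assumes C: "conjugation C" and f: "f \<in> H2" and g: "g \<in> H2"
  shows "h2_inner (C f) (C g) = h2_inner g f"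
proof -
  have norm_C: "h2_norm (\<lambda>n. C f n + b * C g n) = h2_norm (\<lambda>n. f n + cnj b * g n)" for b
  proof -
    have "C (\<lambda>n. 1 * f n + cnj b * g n) = (\<lambda>n. cnj 1 * C f n + cnj (cnj b) * C g n)"
      using C f g unfolding conjugation_def by blast
    moreover have "h2_norm (C (\<lambda>n. 1 * f n + cnj b * g n)) = h2_norm (\<lambda>n. 1 * f n + cnj b * g n)"
      using C H2_lincomb[OF f g, of 1 "cnj b"] unfolding conjugation_def by blast
    ultimately show ?thesis by simp
  qed
  have "4 * h2_inner (C f) (C g) = cnj (4 * h2_inner f g)"
    unfolding h2_polarization[OF conjugation_in_H2[OF C f] conjugation_in_H2[OF C g]]
      h2_polarization[OF f g] norm_C
    by simp
  then show ?thesis using h2_inner_commute[OF f g] by simp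
qed

lemma h2_inner_conjugation_swap:
  assumes C: "conjugation C" and "y \<in> H2" and "z \<in> H2"
  shows "h2_inner (C y) z = h2_inner (C z) y"
  using h2_inner_conjugation[OF C \<open>y \<in> H2\<close> conjugation_in_H2[OF C \<open>z \<in> H2\<close>]] assms
  by (simp add: conjugation_involutive)

lemma conjugation_coeff:
  assumes "conjugation C" and "x \<in> H2"
  shows "C x m = h2_inner (C (zmono m)) x"
  using h2_inner_conjugation_swap[OF assms zmono_in_H2] by simp

lemma conjugation_zmono_symmetric:
  assumes "conjugation C"
  shows "C (zmono i) j = C (zmono j) i"
  using conjugation_coeff[OF assms zmono_in_H2, of j i] by simp

section \<open>Fourier coefficients of bounded functions on the circle\<close>

abbreviation circle_measure :: "real measure" where
  "circle_measure \<equiv> lebesgue_on {0..2*pi}"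

definition ess_bounded :: "(real \<Rightarrow> complex) \<Rightarrow> bool" where
  "ess_bounded g \<longleftrightarrow>
     g \<in> borel_measurable circle_measure \<and> (\<exists>B. AE t in circle_measure. cmod (g t) \<le> B)"

lemma Linfty_T_iff_ess_bounded: "Linfty_T \<phi> \<longleftrightarrow> ess_bounded (\<lambda>t. \<phi> (cis t))"
  by (simp add: Linfty_T_def ess_bounded_def)

lemma integrable_ess_bounded: "ess_bounded g \<Longrightarrow> integrable circle_measure g"
  unfolding ess_bounded_def
  using finite_measure.integrable_const_bound[OF finite_measure_lebesgue_on] by blast

lemma integrable_norm_square_ess_bounded:
  assumes "ess_bounded g"
  shows "integrable circle_measure (\<lambda>t. (cmod (g t))\<^sup>2)"
proof -
  obtain B where m: "g \<in> borel_measurable circle_measure"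
    and b: "AE t in circle_measure. cmod (g t) \<le> B"
    using assms unfolding ess_bounded_def by blast
  show ?thesis
  proof (rule finite_measure.integrable_const_bound[OF finite_measure_lebesgue_on, where B = "B\<^sup>2"])
    show "AE t in circle_measure. norm ((cmod (g t))\<^sup>2) \<le> B\<^sup>2"
      using b by eventually_elim (simp add: power_mono)
  qed (use m in auto)
qed

lemma ess_bounded_continuous:
  assumes "continuous_on {0..2*pi} g"
  shows "ess_bounded g"
proof -
  obtain B where "\<forall>t\<in>{0..2*pi}. cmod (g t) \<le> B"
    using compact_imp_bounded[OF compact_continuous_image[OF assms]]
    by (auto simp: bounded_iff)
  then have "AE t in circle_measure. cmod (g t) \<le> B"
    by (intro AE_I2) simp
  then show ?thesis
    unfolding ess_bounded_def
    using continuous_imp_measurable_on_sets_lebesgue[OF assms] by auto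
qed

lemma ess_bounded_mult: "ess_bounded f \<Longrightarrow> ess_bounded g \<Longrightarrow> ess_bounded (\<lambda>t. f t * g t)"
proof -
  assume "ess_bounded f" "ess_bounded g"
  then obtain B1 B2
    where "f \<in> borel_measurable circle_measure" "g \<in> borel_measurable circle_measure"
      and "AE t in circle_measure. cmod (f t) \<le> B1" "AE t in circle_measure. cmod (g t) \<le> B2"
    unfolding ess_bounded_def by blast
  moreover from this(3,4) have "AE t in circle_measure. cmod (f t * g t) \<le> B1 * B2"
    by eventually_elim (simp add: norm_mult mult_mono')
  ultimately show ?thesis unfolding ess_bounded_def by auto
qed

lemma ess_bounded_cnj: "ess_bounded g \<Longrightarrow> ess_bounded (\<lambda>t. cnj (g t))"
  unfolding ess_bounded_def
  using measurable_compose[OF _ borel_measurable_continuous_onI[OF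
      continuous_on_cnj[OF continuous_on_id]]]
  by (auto simp: o_def)

lemma Linfty_T_mult: "Linfty_T f \<Longrightarrow> Linfty_T g \<Longrightarrow> Linfty_T (\<lambda>z. f z * g z)"
  by (simp add: Linfty_T_iff_ess_bounded ess_bounded_mult)

lemma Linfty_T_cnj: "Linfty_T f \<Longrightarrow> Linfty_T (\<lambda>z. cnj (f z))"
  by (simp add: Linfty_T_iff_ess_bounded ess_bounded_cnj)

lemma Linfty_T_polynomial: "Linfty_T (\<lambda>z. \<Sum>m<N. c m * z ^ m)"
  unfolding Linfty_T_iff_ess_bounded by (intro ess_bounded_continuous continuous_intros)

lemma integral_cis_int_multiple:
  "integral\<^sup>L circle_measure (\<lambda>t. cis (of_int j * t)) = (if j = 0 then 2*pi else 0)"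
proof (cases "j = 0")
  case True
  then show ?thesis by (simp add: measure_restrict_space scaleR_conv_of_real)
next
  case False
  have cont: "continuous_on {0..2*pi} (\<lambda>t. cis (of_int j * t))"
    by (intro continuous_intros)
  have antideriv: "((\<lambda>t. cis (of_int j * t) / (\<i> * of_int j))
      has_vector_derivative cis (of_int j * t)) (at t within {0..2*pi})" for t
    unfolding has_vector_derivative_def
    by (rule has_derivative_eq_rhs, (rule derivative_eq_intros has_derivative_cis)+)
       (use False in \<open>auto simp: fun_eq_iff field_simps scaleR_conv_of_real\<close>)
  have "((\<lambda>t. cis (of_int j * t)) has_integral
      (cis (of_int j * (2*pi)) / (\<i> * of_int j) - cis (of_int j * 0) / (\<i> * of_int j))) {0..2*pi}"
    by (rule fundamental_theorem_of_calculus) (use antideriv in auto)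
  moreover have "cis (of_int j * (2*pi)) = 1"
    using cis_multiple_2pi[OF Ints_of_int[of j]] by (simp add: mult.commute)
  ultimately have "integral {0..2*pi} (\<lambda>t. cis (of_int j * t)) = 0"
    by (simp add: integral_unique)
  then show ?thesis
    using False lebesgue_integral_eq_integral[OF continuous_imp_integrable_real[OF cont]] by simp
qed

lemma integral_trig_polynomial_norm_square:
  assumes "finite K"
  shows "integral\<^sup>L circle_measure (\<lambda>t. (cmod (\<Sum>k\<in>K. d k * cis (of_int k * t)))\<^sup>2)
    = 2*pi * (\<Sum>k\<in>K. (cmod (d k))\<^sup>2)"
proof -
  have expand: "complex_of_real ((cmod (\<Sum>k\<in>K. d k * cis (of_int k * t)))\<^sup>2)
      = (\<Sum>k\<in>K. \<Sum>l\<in>K. (d k * cnj (d l)) * cis (of_int (k - l) * t))" for t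
    unfolding complex_norm_square by (simp add: sum_product cis_cnj cis_mult algebra_simps)
  have integrable: "integrable circle_measure (\<lambda>t. c * cis (a * t))" for c a
    by (rule continuous_imp_integrable_real) (intro continuous_intros)
  have "complex_of_real (integral\<^sup>L circle_measure (\<lambda>t. (cmod (\<Sum>k\<in>K. d k * cis (of_int k * t)))\<^sup>2))
      = (\<Sum>k\<in>K. \<Sum>l\<in>K. integral\<^sup>L circle_measure (\<lambda>t. (d k * cnj (d l)) * cis (of_int (k - l) * t)))"
    unfolding integral_complex_of_real[symmetric] expand
    by (simp add: integrable Bochner_Integration.integral_sum)
  also have "\<dots> = (\<Sum>k\<in>K. \<Sum>l\<in>K. if l = k then of_real (2*pi) * (d k * cnj (d l)) else 0)"
    by (intro sum.cong refl) (simp add: integral_cis_int_multiple del: of_int_diff)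
  also have "\<dots> = of_real (2*pi * (\<Sum>k\<in>K. (cmod (d k))\<^sup>2))"
    using assms by (simp add: complex_norm_square[unfolded of_real_power] sum_distrib_left)
  finally show ?thesis by (simp only: of_real_eq_iff)
qed

lemma integral_polynomial_norm_square:
  "integral\<^sup>L circle_measure (\<lambda>t. (cmod (\<Sum>m<N. c m * cis t ^ m))\<^sup>2) = 2*pi * (\<Sum>m<N. (cmod (c m))\<^sup>2)"
proof -
  have "(\<Sum>m<N. c m * cis t ^ m) = (\<Sum>k\<in>int ` {..<N}. c (nat k) * cis (of_int k * t))" for t
    by (simp add: sum.reindex Complex.DeMoivre)
  moreover have "(\<Sum>m<N. (cmod (c m))\<^sup>2) = (\<Sum>k\<in>int ` {..<N}. (cmod (c (nat k)))\<^sup>2)"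
    by (simp add: sum.reindex)
  ultimately show ?thesis by (simp add: integral_trig_polynomial_norm_square)
qed

lemma bessel_inequality:
  assumes g: "Linfty_T g" and K: "finite K"
  shows "(\<Sum>k\<in>K. (cmod (fourier_coeff g k))\<^sup>2)
    \<le> integral\<^sup>L circle_measure (\<lambda>t. (cmod (g (cis t)))\<^sup>2) / (2*pi)"
proof -
  define G where "G = (\<lambda>t. g (cis t))"
  define c where "c = fourier_coeff g"
  define s where "s t = (\<Sum>k\<in>K. c k * cis (of_int k * t))" for t
  define S where "S = (\<Sum>k\<in>K. (cmod (c k))\<^sup>2)"
  have G: "ess_bounded G" using g by (simp add: Linfty_T_iff_ess_bounded G_def)
  have s: "ess_bounded s" unfolding s_def by (intro ess_bounded_continuous continuous_intros)
  have G_cis: "integrable circle_measure (\<lambda>t. a * (G t * cis (- (of_int k * t))))" for a k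
    by (intro integrable_mult_right integrable_ess_bounded ess_bounded_mult[OF G]
        ess_bounded_continuous continuous_intros)
  define X where "X t = G t * cnj (s t)" for t
  have X: "integrable circle_measure X"
    unfolding X_def by (intro integrable_ess_bounded ess_bounded_mult G ess_bounded_cnj s)
  have cross: "integral\<^sup>L circle_measure X = of_real (2*pi*S)"
  proof -
    have "X = (\<lambda>t. \<Sum>k\<in>K. cnj (c k) * (G t * cis (- (of_int k * t))))"
      unfolding X_def s_def by (simp add: fun_eq_iff cis_cnj sum_distrib_left algebra_simps)
    then have "integral\<^sup>L circle_measure X
        = (\<Sum>k\<in>K. cnj (c k) * integral\<^sup>L circle_measure (\<lambda>t. G t * cis (- (of_int k * t))))"
      using G_cis by (simp add: Bochner_Integration.integral_sum)
    also have "\<dots> = (\<Sum>k\<in>K. cnj (c k) * (of_real (2*pi) * c k))"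
      by (simp add: c_def fourier_coeff_def G_def)
    finally show ?thesis
      by (simp add: S_def complex_norm_square[unfolded of_real_power] sum_distrib_left ac_simps)
  qed
  have expand: "(cmod (G t - s t))\<^sup>2 = (cmod (G t))\<^sup>2 - 2 * Re (X t) + (cmod (s t))\<^sup>2" for t
    unfolding X_def by (simp add: cmod_power2 power2_diff algebra_simps)
  have "0 \<le> integral\<^sup>L circle_measure (\<lambda>t. (cmod (G t - s t))\<^sup>2)"
    by simp
  also have "\<dots> = integral\<^sup>L circle_measure (\<lambda>t. (cmod (G t))\<^sup>2)
      - 2 * Re (integral\<^sup>L circle_measure X) + integral\<^sup>L circle_measure (\<lambda>t. (cmod (s t))\<^sup>2)"
    unfolding expand
    using integrable_norm_square_ess_bounded[OF G] integrable_norm_square_ess_bounded[OF s] X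
    by simp
  also have "\<dots> = integral\<^sup>L circle_measure (\<lambda>t. (cmod (G t))\<^sup>2) - 2*pi*S"
    unfolding cross s_def S_def by (simp add: integral_trig_polynomial_norm_square K)
  finally show ?thesis
    unfolding S_def c_def G_def by (simp add: field_simps)
qed

lemma fourier_coeff_cnj: "fourier_coeff (\<lambda>z. cnj (\<phi> z)) k = cnj (fourier_coeff \<phi> (- k))"
proof -
  have "integral\<^sup>L circle_measure (\<lambda>t. cnj (\<phi> (cis t)) * cis (- (of_int k * t)))
      = integral\<^sup>L circle_measure (\<lambda>t. cnj (\<phi> (cis t) * cis (- (of_int (- k) * t))))"
    by (rule arg_cong[where f = "integral\<^sup>L _"]) (simp add: fun_eq_iff cis_cnj)
  also have "\<dots> = cnj (integral\<^sup>L circle_measure (\<lambda>t. \<phi> (cis t) * cis (- (of_int (- k) * t))))"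
    by (rule Bochner_Integration.integral_cnj)
  finally show ?thesis by (simp add: fourier_coeff_def)
qed

lemma fourier_coeff_mult_polynomial:
  assumes "Linfty_T \<phi>"
  shows "fourier_coeff (\<lambda>z. \<phi> z * (\<Sum>m<N. c m * z ^ m)) k
    = (\<Sum>m<N. fourier_coeff \<phi> (k - int m) * c m)"
proof -
  have "\<phi> (cis t) * (\<Sum>m<N. c m * cis t ^ m) * cis (- (of_int k * t))
      = (\<Sum>m<N. c m * (\<phi> (cis t) * cis (- (of_int (k - int m) * t))))" for t
  proof -
    have "cis t ^ m * cis (- (of_int k * t)) = cis (- (of_int (k - int m) * t))" for m
      by (simp add: Complex.DeMoivre cis_mult algebra_simps)
    then show ?thesis by (simp add: sum_distrib_left sum_distrib_right algebra_simps)
  qed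
  moreover have "integrable circle_measure (\<lambda>t. c * (\<phi> (cis t) * cis (- (of_int j * t))))" for c j
    using assms unfolding Linfty_T_iff_ess_bounded
    by (intro integrable_mult_right integrable_ess_bounded
        ess_bounded_mult[OF _ ess_bounded_continuous] continuous_intros)
  ultimately have "integral\<^sup>L circle_measure
        (\<lambda>t. \<phi> (cis t) * (\<Sum>m<N. c m * cis t ^ m) * cis (- (of_int k * t)))
      = (\<Sum>m<N. c m * integral\<^sup>L circle_measure (\<lambda>t. \<phi> (cis t) * cis (- (of_int (k - int m) * t))))"
    by (simp add: Bochner_Integration.integral_sum del: of_int_diff)
  then show ?thesis
    unfolding fourier_coeff_def by (simp add: sum_distrib_left ac_simps del: of_int_diff)
qed

section \<open>Toeplitz operators\<close>

lemma toeplitz_section_bound: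
  assumes \<phi>: "Linfty_T \<phi>" and B: "AE t in circle_measure. cmod (\<phi> (cis t)) \<le> B" and K: "finite K"
  shows "(\<Sum>k\<in>K. (cmod (\<Sum>m<N. fourier_coeff \<phi> (k - int m) * c m))\<^sup>2)
    \<le> B\<^sup>2 * (\<Sum>m<N. (cmod (c m))\<^sup>2)"
proof -
  define p where "p = (\<lambda>z. \<Sum>m<N. c m * z ^ m)"
  have \<phi>p: "Linfty_T (\<lambda>z. \<phi> z * p z)"
    unfolding p_def by (intro Linfty_T_mult \<phi> Linfty_T_polynomial)
  have "(\<Sum>k\<in>K. (cmod (\<Sum>m<N. fourier_coeff \<phi> (k - int m) * c m))\<^sup>2)
      = (\<Sum>k\<in>K. (cmod (fourier_coeff (\<lambda>z. \<phi> z * p z) k))\<^sup>2)"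
    unfolding p_def fourier_coeff_mult_polynomial[OF \<phi>] ..
  also have "\<dots> \<le> integral\<^sup>L circle_measure (\<lambda>t. (cmod (\<phi> (cis t) * p (cis t)))\<^sup>2) / (2*pi)"
    by (rule bessel_inequality[OF \<phi>p K])
  also have "\<dots> \<le> integral\<^sup>L circle_measure (\<lambda>t. B\<^sup>2 * (cmod (p (cis t)))\<^sup>2) / (2*pi)"
  proof (intro divide_right_mono integral_mono_AE)
    show "integrable circle_measure (\<lambda>t. (cmod (\<phi> (cis t) * p (cis t)))\<^sup>2)"
      using \<phi>p by (intro integrable_norm_square_ess_bounded) (simp add: Linfty_T_iff_ess_bounded)
    show "integrable circle_measure (\<lambda>t. B\<^sup>2 * (cmod (p (cis t)))\<^sup>2)"
      using Linfty_T_polynomial[where c = c and N = N] unfolding p_def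
      by (intro integrable_mult_right integrable_norm_square_ess_bounded)
         (simp add: Linfty_T_iff_ess_bounded)
    show "AE t in circle_measure. (cmod (\<phi> (cis t) * p (cis t)))\<^sup>2 \<le> B\<^sup>2 * (cmod (p (cis t)))\<^sup>2"
      using B by eventually_elim (simp add: norm_mult power_mult_distrib mult_right_mono power_mono)
  qed simp
  also have "\<dots> = B\<^sup>2 * (\<Sum>m<N. (cmod (c m))\<^sup>2)"
    unfolding p_def by (simp add: integral_polynomial_norm_square)
  finally show ?thesis .
qed

lemma summable_fourier_coeff_square:
  assumes "Linfty_T \<phi>" and "inj h"
  shows "summable (\<lambda>m. (cmod (fourier_coeff \<phi> (h m)))\<^sup>2)"
proof (rule summableI_nonneg_bounded)
  fix N
  have "(\<Sum>m<N. (cmod (fourier_coeff \<phi> (h m)))\<^sup>2) = (\<Sum>k\<in>h ` {..<N}. (cmod (fourier_coeff \<phi> k))\<^sup>2)"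
    using \<open>inj h\<close> by (simp add: sum.reindex inj_on_subset)
  also have "\<dots> \<le> integral\<^sup>L circle_measure (\<lambda>t. (cmod (\<phi> (cis t)))\<^sup>2) / (2*pi)"
    by (rule bessel_inequality[OF assms(1)]) simp
  finally show "(\<Sum>m<N. (cmod (fourier_coeff \<phi> (h m)))\<^sup>2)
    \<le> integral\<^sup>L circle_measure (\<lambda>t. (cmod (\<phi> (cis t)))\<^sup>2) / (2*pi)" .
qed simp

lemma summable_toeplitz_series:
  assumes "Linfty_T \<phi>" and "f \<in> H2"
  shows "summable (\<lambda>m. fourier_coeff \<phi> (int n - int m) * f m)"
  using assms
  by (intro square_summable_mult summable_fourier_coeff_square) (auto simp: inj_def H2_def)

lemma toeplitz_bounded:
  assumes \<phi>: "Linfty_T \<phi>" and B: "AE t in circle_measure. cmod (\<phi> (cis t)) \<le> B"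
    and f: "f \<in> H2"
  shows "toeplitz \<phi> f \<in> H2" and "h2_norm (toeplitz \<phi> f) \<le> \<bar>B\<bar> * h2_norm f"
proof -
  have fs: "summable (\<lambda>m. (cmod (f m))\<^sup>2)" using f by (simp add: H2_def)
  have partial: "(\<Sum>n<L. (cmod (toeplitz \<phi> f n))\<^sup>2) \<le> B\<^sup>2 * (\<Sum>m. (cmod (f m))\<^sup>2)" for L
  proof (rule LIMSEQ_le_const2)
    show "(\<lambda>N. \<Sum>n<L. (cmod (\<Sum>m<N. fourier_coeff \<phi> (int n - int m) * f m))\<^sup>2)
        \<longlonglongrightarrow> (\<Sum>n<L. (cmod (toeplitz \<phi> f n))\<^sup>2)"
      unfolding toeplitz_def
      by (intro tendsto_intros summable_LIMSEQ summable_toeplitz_series \<phi> f)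
    have "(\<Sum>n<L. (cmod (\<Sum>m<N. fourier_coeff \<phi> (int n - int m) * f m))\<^sup>2)
        \<le> B\<^sup>2 * (\<Sum>m. (cmod (f m))\<^sup>2)" for N
    proof -
      have "(\<Sum>n<L. (cmod (\<Sum>m<N. fourier_coeff \<phi> (int n - int m) * f m))\<^sup>2)
          = (\<Sum>k\<in>int ` {..<L}. (cmod (\<Sum>m<N. fourier_coeff \<phi> (k - int m) * f m))\<^sup>2)"
        by (simp add: sum.reindex)
      also have "\<dots> \<le> B\<^sup>2 * (\<Sum>m<N. (cmod (f m))\<^sup>2)"
        by (rule toeplitz_section_bound[OF \<phi> B]) simp
      also have "\<dots> \<le> B\<^sup>2 * (\<Sum>m. (cmod (f m))\<^sup>2)"
        by (intro mult_left_mono sum_le_suminf fs) auto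
      finally show ?thesis .
    qed
    then show "\<exists>N0. \<forall>N\<ge>N0. (\<Sum>n<L. (cmod (\<Sum>m<N. fourier_coeff \<phi> (int n - int m) * f m))\<^sup>2)
        \<le> B\<^sup>2 * (\<Sum>m. (cmod (f m))\<^sup>2)"
      by blast
  qed
  have summable: "summable (\<lambda>n. (cmod (toeplitz \<phi> f n))\<^sup>2)"
    by (rule summableI_nonneg_bounded[OF _ partial]) simp
  then show "toeplitz \<phi> f \<in> H2" by (simp add: H2_def)
  have "(\<Sum>n. (cmod (toeplitz \<phi> f n))\<^sup>2) \<le> B\<^sup>2 * (\<Sum>m. (cmod (f m))\<^sup>2)"
    by (rule suminf_le_const[OF summable partial])
  then have "h2_norm (toeplitz \<phi> f) \<le> sqrt (B\<^sup>2 * (\<Sum>m. (cmod (f m))\<^sup>2))"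
    unfolding h2_norm_def by (rule real_sqrt_le_mono)
  then show "h2_norm (toeplitz \<phi> f) \<le> \<bar>B\<bar> * h2_norm f"
    by (simp add: h2_norm_def real_sqrt_mult)
qed

lemma toeplitz_in_H2: "Linfty_T \<phi> \<Longrightarrow> f \<in> H2 \<Longrightarrow> toeplitz \<phi> f \<in> H2"
  using toeplitz_bounded(1) unfolding Linfty_T_def by blast

lemma toeplitz_zmono: "toeplitz \<phi> (zmono m) n = fourier_coeff \<phi> (int n - int m)"
proof -
  have "toeplitz \<phi> (zmono m) n = (\<Sum>k\<in>{m}. fourier_coeff \<phi> (int n - int k) * zmono m k)"
    unfolding toeplitz_def by (rule suminf_finite) (auto simp: zmono_def)
  then show ?thesis by (simp add: zmono_def)
qed

lemma toeplitz_add: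
  assumes "Linfty_T \<phi>" and "f \<in> H2" and "g \<in> H2"
  shows "toeplitz \<phi> (\<lambda>m. f m + g m) = (\<lambda>n. toeplitz \<phi> f n + toeplitz \<phi> g n)"
  unfolding toeplitz_def
  using suminf_add[OF summable_toeplitz_series[OF assms(1,2)]
      summable_toeplitz_series[OF assms(1,3)]]
  by (simp add: distrib_left)

lemma h2_inner_toeplitz_finite_support:
  assumes \<phi>: "Linfty_T \<phi>" and g: "g \<in> H2" and supp: "\<forall>m\<ge>N. f m = 0"
  shows "h2_inner (toeplitz \<phi> f) g = (\<Sum>m<N. f m * cnj (toeplitz (\<lambda>z. cnj (\<phi> z)) g m))"
proof -
  have summable: "summable (\<lambda>n. fourier_coeff \<phi> (int n - int m) * cnj (g n))" for m
    using \<phi> g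
    by (intro square_summable_mult summable_fourier_coeff_square) (auto simp: inj_def H2_def)
  have "toeplitz \<phi> f n = (\<Sum>m<N. fourier_coeff \<phi> (int n - int m) * f m)" for n
    unfolding toeplitz_def using supp by (intro suminf_finite) auto
  then have "h2_inner (toeplitz \<phi> f) g
      = (\<Sum>n. \<Sum>m<N. f m * (fourier_coeff \<phi> (int n - int m) * cnj (g n)))"
    unfolding h2_inner_def by (simp add: sum_distrib_left sum_distrib_right ac_simps)
  also have "\<dots> = (\<Sum>m<N. \<Sum>n. f m * (fourier_coeff \<phi> (int n - int m) * cnj (g n)))"
    by (rule suminf_sum) (intro summable_mult summable)
  also have "\<dots> = (\<Sum>m<N. f m * (\<Sum>n. fourier_coeff \<phi> (int n - int m) * cnj (g n)))"
    by (intro sum.cong refl suminf_mult summable)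
  also have "\<dots> = (\<Sum>m<N. f m * cnj (toeplitz (\<lambda>z. cnj (\<phi> z)) g m))"
  proof -
    have "cnj (toeplitz (\<lambda>z. cnj (\<phi> z)) g m)
        = (\<Sum>n. cnj (fourier_coeff (\<lambda>z. cnj (\<phi> z)) (int m - int n) * g n))" for m
      unfolding toeplitz_def
      by (rule suminf_cnj[symmetric, OF summable_toeplitz_series[OF Linfty_T_cnj[OF \<phi>] g]])
    then show ?thesis by (simp add: fourier_coeff_cnj)
  qed
  finally show ?thesis .
qed

text \<open>The double series for the inner product need not converge absolutely, so the order of
  summation is exchanged only for the finitely supported heads of f; the contribution of the
  tails vanishes in the limit because T_phi is bounded.\<close>

lemma h2_inner_toeplitz_adjoint:
  assumes \<phi>: "Linfty_T \<phi>" and f: "f \<in> H2" and g: "g \<in> H2"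
  shows "h2_inner (toeplitz \<phi> f) g = h2_inner f (toeplitz (\<lambda>z. cnj (\<phi> z)) g)"
proof -
  obtain B where B: "AE t in circle_measure. cmod (\<phi> (cis t)) \<le> B"
    using \<phi> unfolding Linfty_T_def by blast
  define T' where "T' = toeplitz (\<lambda>z. cnj (\<phi> z)) g"
  define head where "head N = (\<lambda>m. if m < N then f m else 0)" for N
  define tail where "tail N = (\<lambda>m. if m < N then 0 else f m)" for N
  have head: "head N \<in> H2" and tail: "tail N \<in> H2" for N
    unfolding head_def tail_def by (auto intro: H2_dominated[OF f])
  have split: "h2_inner (toeplitz \<phi> f) g
      = (\<Sum>m<N. f m * cnj (T' m)) + h2_inner (toeplitz \<phi> (tail N)) g" for N
  proof -
    have "f = (\<lambda>m. head N m + tail N m)"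
      by (simp add: fun_eq_iff head_def tail_def)
    then have "h2_inner (toeplitz \<phi> f) g
        = h2_inner (toeplitz \<phi> (head N)) g + h2_inner (toeplitz \<phi> (tail N)) g"
      using head tail g
      by (simp add: toeplitz_add[OF \<phi>] h2_inner_add_left toeplitz_in_H2[OF \<phi>])
    moreover have "h2_inner (toeplitz \<phi> (head N)) g = (\<Sum>m<N. f m * cnj (T' m))"
      unfolding T'_def
      by (subst h2_inner_toeplitz_finite_support[OF \<phi> g, of N]) (auto simp: head_def)
    ultimately show ?thesis by simp
  qed
  have "(\<lambda>N. h2_inner (toeplitz \<phi> (tail N)) g) \<longlonglongrightarrow> 0"
  proof (rule Lim_null_comparison)
    show "\<forall>\<^sub>F N in sequentially.
        norm (h2_inner (toeplitz \<phi> (tail N)) g) \<le> \<bar>B\<bar> * h2_norm (tail N) * h2_norm g"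
    proof (intro always_eventually allI)
      fix N
      have "norm (h2_inner (toeplitz \<phi> (tail N)) g) \<le> h2_norm (toeplitz \<phi> (tail N)) * h2_norm g"
        by (rule h2_inner_norm_le[OF toeplitz_in_H2[OF \<phi> tail] g])
      also have "\<dots> \<le> \<bar>B\<bar> * h2_norm (tail N) * h2_norm g"
        by (intro mult_right_mono toeplitz_bounded(2)[OF \<phi> B tail])
           (use g in \<open>simp add: h2_norm_def H2_def suminf_nonneg\<close>)
      finally show "norm (h2_inner (toeplitz \<phi> (tail N)) g) \<le> \<bar>B\<bar> * h2_norm (tail N) * h2_norm g" .
    qed
    show "(\<lambda>N. \<bar>B\<bar> * h2_norm (tail N) * h2_norm g) \<longlonglongrightarrow> 0"
      using tendsto_mult[OF tendsto_mult[OF tendsto_const h2_norm_tail_tendsto_0[OF f]]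
          tendsto_const]
      by (simp add: tail_def)
  qed
  moreover have "(\<lambda>N. \<Sum>m<N. f m * cnj (T' m)) \<longlonglongrightarrow> h2_inner f T'"
    unfolding h2_inner_def T'_def
    by (intro summable_LIMSEQ summable_h2_inner f toeplitz_in_H2 Linfty_T_cnj \<phi> g)
  ultimately have "(\<lambda>N. (\<Sum>m<N. f m * cnj (T' m)) + h2_inner (toeplitz \<phi> (tail N)) g)
      \<longlonglongrightarrow> h2_inner f T' + 0"
    by (intro tendsto_add)
  then have "(\<lambda>N. h2_inner (toeplitz \<phi> f) g) \<longlonglongrightarrow> h2_inner f T'"
    by (simp only: split[symmetric] add_0_right)
  then show ?thesis
    unfolding T'_def by (simp add: LIMSEQ_const_iff)
qed

lemma adj_H2_toeplitz:
  assumes "Linfty_T \<phi>" and "g \<in> H2"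
  shows "adj_H2 (toeplitz \<phi>) g = toeplitz (\<lambda>z. cnj (\<phi> z)) g"
  using assms
  by (intro adj_H2_eqI toeplitz_in_H2 Linfty_T_cnj ballI h2_inner_toeplitz_adjoint)

lemma h2_inner_toeplitz_expansion:
  assumes "Linfty_T \<phi>" and "x \<in> H2"
  shows "h2_inner (toeplitz \<phi> x) y = (\<Sum>i. \<Sum>j. x j * fourier_coeff \<phi> (int i - int j) * cnj (y i))"
  unfolding h2_inner_def toeplitz_def
  by (intro suminf_cong, subst suminf_mult2[OF summable_toeplitz_series[OF assms]])
     (simp add: ac_simps)

section \<open>C-symmetric Toeplitz operators\<close>

lemma C_symmetric_toeplitz_iff:
  assumes C: "conjugation C" and \<phi>: "Linfty_T \<phi>"
  shows "C_symmetric C (toeplitz \<phi>) \<longleftrightarrow>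
    (\<forall>m n. fourier_coeff \<phi> (int m - int n)
       = h2_inner (toeplitz \<phi> (C (zmono m))) (C (zmono n)))"
proof -
  have Cz: "C (zmono n) \<in> H2" for n by (rule conjugation_in_H2[OF C zmono_in_H2])
  have TCz: "toeplitz \<phi> (C (zmono n)) \<in> H2" for n by (rule toeplitz_in_H2[OF \<phi> Cz])
  have entry: "C (adj_H2 (toeplitz \<phi>) (C f)) n = h2_inner (toeplitz \<phi> (C (zmono n))) (C f)"
    if f: "f \<in> H2" for f n
  proof -
    have Cf: "C f \<in> H2" by (rule conjugation_in_H2[OF C f])
    have "C (adj_H2 (toeplitz \<phi>) (C f)) n = h2_inner (C (zmono n)) (toeplitz (\<lambda>z. cnj (\<phi> z)) (C f))"
      using Cf by (simp add: adj_H2_toeplitz[OF \<phi>] conjugation_coeff[OF C]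
          toeplitz_in_H2[OF Linfty_T_cnj[OF \<phi>]])
    also have "\<dots> = h2_inner (toeplitz \<phi> (C (zmono n))) (C f)"
      by (rule h2_inner_toeplitz_adjoint[OF \<phi> Cz Cf, symmetric])
    finally show ?thesis .
  qed
  show ?thesis
  proof
    assume sym: "C_symmetric C (toeplitz \<phi>)"
    show "\<forall>m n. fourier_coeff \<phi> (int m - int n)
      = h2_inner (toeplitz \<phi> (C (zmono m))) (C (zmono n))"
    proof (intro allI)
      fix m n
      have "C (adj_H2 (toeplitz \<phi>) (C (zmono n))) m = toeplitz \<phi> (zmono n) m"
        using sym zmono_in_H2 unfolding C_symmetric_def by simp
      then show "fourier_coeff \<phi> (int m - int n)
          = h2_inner (toeplitz \<phi> (C (zmono m))) (C (zmono n))"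
        by (simp add: entry zmono_in_H2 toeplitz_zmono)
    qed
  next
    assume entries: "\<forall>m n. fourier_coeff \<phi> (int m - int n)
      = h2_inner (toeplitz \<phi> (C (zmono m))) (C (zmono n))"
    show "C_symmetric C (toeplitz \<phi>)"
      unfolding C_symmetric_def
    proof (intro ballI ext)
      fix f n assume f: "f \<in> H2"
      have "cnj (C (toeplitz \<phi> (C (zmono n))) m) = fourier_coeff \<phi> (int n - int m)" for m
        using entries Cz TCz
        by (simp add: conjugation_coeff[OF C] h2_inner_commute[symmetric])
      then have "h2_inner f (C (toeplitz \<phi> (C (zmono n)))) = toeplitz \<phi> f n"
        by (simp add: h2_inner_def toeplitz_def mult.commute)
      moreover have "h2_inner (toeplitz \<phi> (C (zmono n))) (C f)
          = h2_inner f (C (toeplitz \<phi> (C (zmono n))))"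
        using h2_inner_conjugation[OF C conjugation_in_H2[OF C TCz] f] TCz
        by (simp add: conjugation_involutive[OF C])
      ultimately show "C (adj_H2 (toeplitz \<phi>) (C f)) n = toeplitz \<phi> f n"
        by (simp add: entry f)
    qed
  qed
qed

theorem corollary5p4:
  fixes \<phi> :: "complex \<Rightarrow> complex"
    and C U :: "(nat \<Rightarrow> complex) \<Rightarrow> nat \<Rightarrow> complex"
  assumes phi: "Linfty_T \<phi>"
    and C: "conjugation C"
    and U: "unitary_H2 U"
    and fact: "\<forall>f\<in>H2. C f = U (J_H2 f)"
  defines "u \<equiv> (\<lambda>i j. h2_inner (U (zmono i)) (zmono j))"
  shows "(C_symmetric C (toeplitz \<phi>)
            \<longleftrightarrow> (\<forall>m n. fourier_coeff \<phi> (int m - int n)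
                     = h2_inner (adj_H2 U (toeplitz \<phi> (U (zmono m)))) (zmono n)))
       \<and> ((\<forall>m n. fourier_coeff \<phi> (int m - int n)
                     = h2_inner (adj_H2 U (toeplitz \<phi> (U (zmono m)))) (zmono n))
            \<longleftrightarrow> (\<forall>m n. fourier_coeff \<phi> (int m - int n)
                     = (\<Sum>i. \<Sum>j. u m j * fourier_coeff \<phi> (int i - int j) * cnj (u i n))))"
proof -
  have "J_H2 (zmono n) = zmono n" for n
    by (auto simp: J_H2_def zmono_def)
  then have Uz: "U (zmono n) = C (zmono n)" for n
    using fact zmono_in_H2[of n] by simp
  have u_row: "u i j = C (zmono i) j" and u_col: "u i j = C (zmono j) i" for i j
    using conjugation_zmono_symmetric[OF C] by (simp_all add: u_def Uz)
  have adjoint_form: "h2_inner (adj_H2 U (toeplitz \<phi> (U (zmono m)))) (zmono n)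
      = h2_inner (toeplitz \<phi> (C (zmono m))) (C (zmono n))" for m n
    using h2_inner_adj_H2_unitary[OF U toeplitz_in_H2[OF phi] zmono_in_H2]
      unitary_H2_in_H2[OF U zmono_in_H2]
    by (simp add: Uz)
  have matrix_form: "(\<Sum>i. \<Sum>j. u m j * fourier_coeff \<phi> (int i - int j) * cnj (u i n))
      = h2_inner (toeplitz \<phi> (C (zmono m))) (C (zmono n))" for m n
    using h2_inner_toeplitz_expansion[OF phi conjugation_in_H2[OF C zmono_in_H2]]
    by (simp add: u_row[of m] u_col[of _ n])
  show ?thesis
    unfolding adjoint_form matrix_form C_symmetric_toeplitz_iff[OF C phi] by simp
qed

end
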